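(* Let $k\ge1$ and $n\ge 2^k-1$ be integers, and set $n_2=2^k-1$, $n_1=n-n_2$. Then in the binary symmetric channel with a single error and one-time feedback (after the first $n_1$ symbols), one can transmit $$M_1(n)=2^{n_1}\left\lfloor\frac{2^{n_2}}{n_1+n_2+1}\right\rfloor$$ messages with a single-error-correcting strategy.
   Context: Binary symmetric channel: alphabet $\{0,1\}$, an error replaces a symbol by the other symbol; "a single error" means at most one error in the whole transmission. A strategy with one-time feedback after $n_1$ symbols for messages $m\in[M]$: the first $n_1$ transmitted symbols depend only on $m$; then the encoder learns the $n_1$ received symbols (error-free, instantaneously), and the remaining $n_2$ symbols depend on $m$ and those received symbols. It transmits $M$ messages with a single error if the sets of output sequences reachable from distinct messages with at most one error are pairwise disjoint. *)

theory Defs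
  imports Main
begin

definition hdist :: "bool list \<Rightarrow> bool list \<Rightarrow> nat" where
  "hdist xs ys = length (filter (\<lambda>(a, b). a \<noteq> b) (zip xs ys))"

text \<open>A strategy with one-time feedback after n1 symbols, for messages
m in {..<M}: enc1 m is the first block (length n1), depending only on m;
enc2 m z is the second block (length n2), depending on m and the received
first block z (for every possible received word z of length n1).\<close>

definition fb_strategy ::
  "nat \<Rightarrow> nat \<Rightarrow> nat \<Rightarrow> (nat \<Rightarrow> bool list) \<Rightarrow> (nat \<Rightarrow> bool list \<Rightarrow> bool list) \<Rightarrow> bool" where
  "fb_strategy n1 n2 M enc1 enc2 \<longleftrightarrow>
     (\<forall>m<M. length (enc1 m) = n1 \<and>
        (\<forall>z. length z = n1 \<longrightarrow> length (enc2 m z) = n2))"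

definition fb_outputs ::
  "nat \<Rightarrow> nat \<Rightarrow> (nat \<Rightarrow> bool list) \<Rightarrow> (nat \<Rightarrow> bool list \<Rightarrow> bool list) \<Rightarrow> nat \<Rightarrow> bool list set" where
  "fb_outputs n1 n2 enc1 enc2 m =
     {z1 @ z2 | z1 z2. length z1 = n1 \<and> length z2 = n2 \<and>
        hdist (enc1 m) z1 + hdist (enc2 m z1) z2 \<le> 1}"

definition transmits_single_error ::
  "nat \<Rightarrow> nat \<Rightarrow> nat \<Rightarrow> (nat \<Rightarrow> bool list) \<Rightarrow> (nat \<Rightarrow> bool list \<Rightarrow> bool list) \<Rightarrow> bool" where
  "transmits_single_error n1 n2 M enc1 enc2 \<longleftrightarrow>
     fb_strategy n1 n2 M enc1 enc2 \<and>
     (\<forall>m<M. \<forall>m'<M. m \<noteq> m' \<longrightarrow>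
        fb_outputs n1 n2 enc1 enc2 m \<inter> fb_outputs n1 n2 enc1 enc2 m' = {})"

end

theory Submission
  imports Defs "HOL-Library.Disjoint_Sets"
begin

(* Split a message into a first block a (any of the 2^n1 words of length n1) and an index b < B.
   If the first block arrives intact, the encoder sends the b-th word of a code C of length n2
   whose radius-1 balls are disjoint; if it arrived with an error at position i, no further error
   can occur, so the encoder sends a spare word s(b, i) lying outside these B balls. The outputs of
   distinct messages are disjoint as soon as B (n2 + 1) + B n1 <= 2^n2. The Hamming code of length
   n2 = 2^k - 1 is perfect, so it has 2^n2 / (n2 + 1) codewords, enough for
   B = floor (2^n2 / (n1 + n2 + 1)). *)

lemma card_bool_lists_length: "card {xs :: bool list. length xs = n} = 2 ^ n"
  using card_lists_length_eq[of "UNIV :: bool set" n] by simp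

lemma finite_bool_lists_length: "finite {xs :: bool list. length xs = n}"
  using finite_lists_length_eq[of "UNIV :: bool set" n] by simp

definition flip_at :: "bool list \<Rightarrow> nat \<Rightarrow> bool list" where
  "flip_at x i = x[i := \<not> x ! i]"

lemma length_flip_at [simp]: "length (flip_at x i) = length x"
  by (simp add: flip_at_def)

lemma flip_at_flip_at [simp]: "flip_at (flip_at x i) i = x"
  by (cases "i < length x") (simp_all add: flip_at_def list_update_beyond)

lemma flip_at_neq [simp]: "i < length x \<Longrightarrow> flip_at x i \<noteq> x"
  by (metis flip_at_def list_update_same_conv nth_list_update_eq)

lemma flip_at_eq_flip_at_iff:
  "i < length x \<Longrightarrow> j < length x \<Longrightarrow> flip_at x i = flip_at x j \<longleftrightarrow> i = j"
  by (auto simp: flip_at_def list_eq_iff_nth_eq nth_list_update)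

lemma hdist_Cons_Cons: "hdist (a # x) (b # y) = (if a = b then 0 else 1) + hdist x y"
  by (simp add: hdist_def)

lemma hdist_eq_0_iff: "length x = length y \<Longrightarrow> hdist x y = 0 \<longleftrightarrow> x = y"
  by (induction x y rule: list_induct2) (simp_all add: hdist_def)

lemma hdist_le_1_iff:
  "length x = length y \<Longrightarrow> hdist x y \<le> 1 \<longleftrightarrow> y = x \<or> (\<exists>i<length x. y = flip_at x i)"
proof (induction x y rule: list_induct2)
  case Nil
  then show ?case by (simp add: hdist_def)
next
  case (Cons a x b y)
  have "(\<exists>i<length (a # x). b # y = flip_at (a # x) i) \<longleftrightarrow>
        (b \<noteq> a \<and> y = x) \<or> (b = a \<and> (\<exists>i<length x. y = flip_at x i))"
    by (auto simp: flip_at_def less_Suc_eq_0_disj)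
  then show ?case
    using Cons by (auto simp: hdist_Cons_Cons hdist_eq_0_iff)
qed

definition hamming_ball1 :: "bool list \<Rightarrow> bool list set" where
  "hamming_ball1 c = {y. length y = length c \<and> hdist c y \<le> 1}"

lemma hamming_ball1_eq: "hamming_ball1 c = insert c (flip_at c ` {..<length c})"
proof -
  have "y \<in> hamming_ball1 c \<longleftrightarrow> y = c \<or> (\<exists>i<length c. y = flip_at c i)" for y
    using hdist_le_1_iff[of c y] by (auto simp: hamming_ball1_def)
  then show ?thesis
    by auto
qed

lemma finite_hamming_ball1 [simp]: "finite (hamming_ball1 c)"
  by (simp add: hamming_ball1_eq)

lemma card_hamming_ball1: "card (hamming_ball1 c) = length c + 1"
proof -
  have "inj_on (flip_at c) {..<length c}"
    by (auto intro: inj_onI simp: flip_at_eq_flip_at_iff)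
  then show ?thesis
    by (auto simp: hamming_ball1_eq card_image card_insert_if dest: sym)
qed

lemma xor_less_power2:
  fixes a b :: nat
  assumes "a < 2 ^ k" and "b < 2 ^ k"
  shows "xor a b < 2 ^ k"
  using assms by (metis take_bit_nat_eq_self_iff take_bit_nat_less_exp take_bit_xor)

fun syndrome_from :: "nat \<Rightarrow> bool list \<Rightarrow> nat" where
  "syndrome_from i [] = 0"
| "syndrome_from i (x # xs) = xor (if x then i else 0) (syndrome_from (Suc i) xs)"

lemma syndrome_from_flip_at:
  "j < length xs \<Longrightarrow> syndrome_from i (flip_at xs j) = xor (syndrome_from i xs) (i + j)"
proof (induction xs arbitrary: i j)
  case Nil
  then show ?case by simp
next
  case (Cons x xs)
  show ?case
  proof (cases j)
    case 0
    then show ?thesis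
      by (cases x) (simp_all add: flip_at_def xor.assoc xor.commute[of i] xor.left_commute[of i])
  next
    case (Suc j')
    then have "flip_at (x # xs) j = x # flip_at xs j'"
      by (simp add: flip_at_def)
    then show ?thesis
      using Cons Suc by (simp add: xor.assoc)
  qed
qed

lemma syndrome_from_less: "i + length xs \<le> 2 ^ k \<Longrightarrow> syndrome_from i xs < 2 ^ k"
  by (induction xs arbitrary: i) (simp_all add: xor_less_power2)

(* Positions are numbered from 1, so in a word of length 2^k - 1 they run through the nonzero
   k-bit numbers: an error at position j changes the syndrome by xor with j, and a word with
   syndrome s \<noteq> 0 is decoded by flipping position s. *)
definition hamming_code :: "nat \<Rightarrow> bool list set" where
  "hamming_code k = {c. length c = 2 ^ k - 1 \<and> syndrome_from 1 c = 0}"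

definition hamming_decode :: "bool list \<Rightarrow> bool list" where
  "hamming_decode y = (let s = syndrome_from 1 y in if s = 0 then y else flip_at y (s - 1))"

lemma hamming_decode_eq:
  assumes "syndrome_from 1 c = 0" and "y \<in> hamming_ball1 c"
  shows "hamming_decode y = c"
  using assms by (auto simp: hamming_ball1_eq hamming_decode_def syndrome_from_flip_at)

lemma disjoint_family_on_hamming_code: "disjoint_family_on hamming_ball1 (hamming_code k)"
  unfolding disjoint_family_on_def hamming_code_def
  by (metis (mono_tags, lifting) disjoint_iff hamming_decode_eq mem_Collect_eq)

lemma hamming_decode_mem:
  assumes "length y = 2 ^ k - 1"
  shows "hamming_decode y \<in> hamming_code k \<and> y \<in> hamming_ball1 (hamming_decode y)"
proof (cases "syndrome_from 1 y = 0")
  case True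
  then show ?thesis
    using assms by (simp add: hamming_decode_def hamming_code_def hamming_ball1_eq)
next
  case False
  define j where "j = syndrome_from 1 y - 1"
  have "syndrome_from 1 y < 2 ^ k"
    using syndrome_from_less[of 1 y k] assms by simp
  then have j: "j < length y" and "1 + j = syndrome_from 1 y"
    using False assms by (simp_all add: j_def)
  then have "syndrome_from 1 (flip_at y j) = 0"
    by (simp add: syndrome_from_flip_at)
  moreover have "hamming_decode y = flip_at y j"
    using False by (simp add: hamming_decode_def j_def)
  ultimately show ?thesis
    using assms j unfolding hamming_code_def hamming_ball1_eq
    by (auto intro!: image_eqI[of y _ j])
qed

lemma card_hamming_code: "2 ^ (2 ^ k - 1) \<le> card (hamming_code k) * 2 ^ k"
proof -
  have fin: "finite (hamming_code k)"
    by (rule finite_subset[OF _ finite_bool_lists_length]) (auto simp: hamming_code_def)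
  have "2 ^ (2 ^ k - 1) = card {y :: bool list. length y = 2 ^ k - 1}"
    by (simp add: card_bool_lists_length)
  also have "\<dots> \<le> card (\<Union>c\<in>hamming_code k. hamming_ball1 c)"
  proof (rule card_mono)
    show "finite (\<Union>c\<in>hamming_code k. hamming_ball1 c)"
      using fin by simp
    show "{y. length y = 2 ^ k - 1} \<subseteq> (\<Union>c\<in>hamming_code k. hamming_ball1 c)"
      using hamming_decode_mem by blast
  qed
  also have "\<dots> \<le> (\<Sum>c\<in>hamming_code k. card (hamming_ball1 c))"
    using fin by (rule card_UN_le)
  also have "\<dots> = card (hamming_code k) * 2 ^ k"
    by (simp add: card_hamming_ball1 hamming_code_def)
  finally show ?thesis .
qed

lemma fb_outputs_cases:
  assumes strategy: "fb_strategy n1 n2 M enc1 enc2" and "m < M"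
    and y: "y \<in> fb_outputs n1 n2 enc1 enc2 m"
  obtains (first_block_correct) y2
    where "y = enc1 m @ y2" and "y2 \<in> hamming_ball1 (enc2 m (enc1 m))"
  | (first_block_error) i
    where "i < n1" and "y = flip_at (enc1 m) i @ enc2 m (flip_at (enc1 m) i)"
proof -
  obtain z1 z2 where y_eq: "y = z1 @ z2" and len: "length z1 = n1" "length z2 = n2"
    and errors: "hdist (enc1 m) z1 + hdist (enc2 m z1) z2 \<le> 1"
    using y by (auto simp: fb_outputs_def)
  have len_enc: "length (enc1 m) = n1" "length (enc2 m z1) = n2"
    using strategy \<open>m < M\<close> len by (auto simp: fb_strategy_def)
  show thesis
  proof (cases "z1 = enc1 m")
    case True
    then show thesis
      using first_block_correct y_eq errors len len_enc by (simp add: hamming_ball1_def)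
  next
    case False
    then obtain i where i: "i < n1" "z1 = flip_at (enc1 m) i"
      using hdist_le_1_iff[of "enc1 m" z1] errors len len_enc by auto
    have "hdist (enc1 m) z1 \<noteq> 0"
      using False hdist_eq_0_iff[of "enc1 m" z1] len len_enc by auto
    then have "z2 = enc2 m z1"
      using hdist_eq_0_iff[of "enc2 m z1" z2] errors len len_enc by simp
    then show thesis
      using first_block_error i y_eq by simp
  qed
qed

(* With at most one error, the received first block is x or a flip of x; on any other z
   the value is irrelevant. *)
definition second_block ::
  "(nat \<Rightarrow> bool list) \<Rightarrow> (nat \<times> nat \<Rightarrow> bool list) \<Rightarrow> nat \<Rightarrow>
    bool list \<Rightarrow> bool list \<Rightarrow> bool list" where
  "second_block c s b x z =
     (if \<exists>i<length x. z = flip_at x i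
      then s (b, THE i. i < length x \<and> z = flip_at x i)
      else c b)"

lemma second_block_self: "second_block c s b x x = c b"
  by (auto simp: second_block_def dest: sym)

lemma second_block_flip_at:
  assumes "i < length x"
  shows "second_block c s b x (flip_at x i) = s (b, i)"
proof -
  have "(THE j. j < length x \<and> flip_at x i = flip_at x j) = i"
    using assms by (auto simp: flip_at_eq_flip_at_iff)
  then show ?thesis
    using assms by (auto simp: second_block_def)
qed

lemma eq_if_mod_div_eq: "(m :: nat) mod d = m' mod d \<Longrightarrow> m div d = m' div d \<Longrightarrow> m = m'"
  by (metis div_mult_mod_eq)

locale feedback_code =
  fixes n1 n2 B :: nat and w c :: "nat \<Rightarrow> bool list" and s :: "nat \<times> nat \<Rightarrow> bool list"
  assumes inj_w: "inj_on w {..<2 ^ n1}"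
    and length_w: "\<And>a. a < 2 ^ n1 \<Longrightarrow> length (w a) = n1"
    and length_c: "\<And>b. b < B \<Longrightarrow> length (c b) = n2"
    and disjoint_c: "disjoint_family_on (\<lambda>b. hamming_ball1 (c b)) {..<B}"
    and inj_s: "inj_on s ({..<B} \<times> {..<n1})"
    and length_s: "\<And>b i. b < B \<Longrightarrow> i < n1 \<Longrightarrow> length (s (b, i)) = n2"
    and s_notin_ball:
      "\<And>b b' i. b < B \<Longrightarrow> b' < B \<Longrightarrow> i < n1 \<Longrightarrow> s (b, i) \<notin> hamming_ball1 (c b')"
begin

definition enc1 :: "nat \<Rightarrow> bool list" where
  "enc1 m = w (m mod 2 ^ n1)"

definition enc2 :: "nat \<Rightarrow> bool list \<Rightarrow> bool list" where
  "enc2 m = second_block c s (m div 2 ^ n1) (enc1 m)"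

lemma message_div_less: "m < 2 ^ n1 * B \<Longrightarrow> m div 2 ^ n1 < B"
  by (simp add: less_mult_imp_div_less mult.commute)

lemma length_enc1: "length (enc1 m) = n1"
  by (simp add: enc1_def length_w)

lemma enc1_eq_iff: "enc1 m = enc1 m' \<longleftrightarrow> m mod 2 ^ n1 = m' mod 2 ^ n1"
  using inj_w by (simp add: enc1_def inj_on_eq_iff)

lemma enc2_enc1: "enc2 m (enc1 m) = c (m div 2 ^ n1)"
  by (simp add: enc2_def second_block_self)

lemma enc2_flip_at: "i < n1 \<Longrightarrow> enc2 m (flip_at (enc1 m) i) = s (m div 2 ^ n1, i)"
  by (simp add: enc2_def second_block_flip_at length_enc1)

lemma fb_strategy: "fb_strategy n1 n2 (2 ^ n1 * B) enc1 enc2"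
  unfolding fb_strategy_def
proof (intro allI impI conjI length_enc1)
  fix m z assume m: "m < 2 ^ n1 * B"
  show "length (enc2 m z) = n2"
  proof (cases "\<exists>i<n1. z = flip_at (enc1 m) i")
    case True
    then show ?thesis
      using message_div_less[OF m] by (auto simp: enc2_flip_at length_s)
  next
    case False
    then show ?thesis
      using message_div_less[OF m] by (auto simp: enc2_def second_block_def length_enc1 length_c)
  qed
qed

lemma eq_if_outputs_without_first_block_error:
  assumes m: "m < 2 ^ n1 * B" and m': "m' < 2 ^ n1 * B"
    and y2: "y2 \<in> hamming_ball1 (enc2 m (enc1 m))"
    and y2': "y2' \<in> hamming_ball1 (enc2 m' (enc1 m'))"
    and eq: "enc1 m @ y2 = enc1 m' @ y2'"
  shows "m = m'"
proof -
  have "enc1 m = enc1 m'" and "y2 = y2'"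
    using eq by (simp_all add: length_enc1)
  moreover have "y2 \<in> hamming_ball1 (c (m div 2 ^ n1))"
    and "y2' \<in> hamming_ball1 (c (m' div 2 ^ n1))"
    using y2 y2' by (simp_all only: enc2_enc1)
  then have "m div 2 ^ n1 = m' div 2 ^ n1"
    using disjoint_c message_div_less[OF m] message_div_less[OF m'] \<open>y2 = y2'\<close>
    unfolding disjoint_family_on_def by blast
  ultimately show ?thesis
    by (metis enc1_eq_iff eq_if_mod_div_eq)
qed

lemma outputs_with_and_without_first_block_error_differ:
  assumes m: "m < 2 ^ n1 * B" and m': "m' < 2 ^ n1 * B" and "i < n1"
    and y2: "y2 \<in> hamming_ball1 (enc2 m (enc1 m))"
  shows "enc1 m @ y2 \<noteq> flip_at (enc1 m') i @ enc2 m' (flip_at (enc1 m') i)"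
proof
  assume "enc1 m @ y2 = flip_at (enc1 m') i @ enc2 m' (flip_at (enc1 m') i)"
  then have "y2 = s (m' div 2 ^ n1, i)"
    using \<open>i < n1\<close> by (simp add: length_enc1 enc2_flip_at)
  then show False
    using y2[unfolded enc2_enc1] \<open>i < n1\<close>
      s_notin_ball[OF message_div_less[OF m'] message_div_less[OF m]] by simp
qed

lemma eq_if_outputs_with_first_block_error:
  assumes m: "m < 2 ^ n1 * B" and m': "m' < 2 ^ n1 * B" and i: "i < n1" and i': "i' < n1"
    and eq: "flip_at (enc1 m) i @ enc2 m (flip_at (enc1 m) i) =
      flip_at (enc1 m') i' @ enc2 m' (flip_at (enc1 m') i')"
  shows "m = m'"
proof -
  have flips: "flip_at (enc1 m) i = flip_at (enc1 m') i'"
    and "s (m div 2 ^ n1, i) = s (m' div 2 ^ n1, i')"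
    using eq i i' by (simp_all add: length_enc1 enc2_flip_at)
  then have "m div 2 ^ n1 = m' div 2 ^ n1" and "i = i'"
    using inj_s message_div_less[OF m] message_div_less[OF m'] i i' by (auto simp: inj_on_def)
  moreover have "enc1 m = enc1 m'"
    using flips \<open>i = i'\<close> flip_at_flip_at by metis
  ultimately show ?thesis
    by (metis enc1_eq_iff eq_if_mod_div_eq)
qed

lemma eq_if_common_output:
  assumes m: "m < 2 ^ n1 * B" and m': "m' < 2 ^ n1 * B"
    and y: "y \<in> fb_outputs n1 n2 enc1 enc2 m" "y \<in> fb_outputs n1 n2 enc1 enc2 m'"
  shows "m = m'"
  using fb_strategy m y(1)
proof (cases rule: fb_outputs_cases)
  case (first_block_correct y2)
  from fb_strategy m' y(2) show ?thesis
    by (cases rule: fb_outputs_cases)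
      (use first_block_correct m m' in \<open>metis eq_if_outputs_without_first_block_error
        outputs_with_and_without_first_block_error_differ\<close>)+
next
  case (first_block_error i)
  from fb_strategy m' y(2) show ?thesis
    by (cases rule: fb_outputs_cases)
      (use first_block_error m m' in \<open>metis eq_if_outputs_with_first_block_error
        outputs_with_and_without_first_block_error_differ\<close>)+
qed

lemma transmits_single_error: "transmits_single_error n1 n2 (2 ^ n1 * B) enc1 enc2"
  using fb_strategy eq_if_common_output by (auto simp: transmits_single_error_def)

end

lemma card_outside_hamming_balls:
  assumes C_words: "C \<subseteq> {y. length y = n}"
    and C_disjoint: "disjoint_family_on hamming_ball1 C"
  shows "card ({y. length y = n} - (\<Union>x\<in>C. hamming_ball1 x)) = 2 ^ n - card C * (n + 1)"
proof -
  have fin_C: "finite C"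
    using C_words finite_bool_lists_length by (rule finite_subset)
  have balls_words: "(\<Union>x\<in>C. hamming_ball1 x) \<subseteq> {y. length y = n}"
    using C_words by (auto simp: hamming_ball1_def)
  have "card (\<Union>x\<in>C. hamming_ball1 x) = (\<Sum>x\<in>C. card (hamming_ball1 x))"
    using C_disjoint fin_C by (simp add: card_UN_disjoint')
  also have "\<dots> = (\<Sum>x\<in>C. n + 1)"
    using C_words by (intro sum.cong) (auto simp: card_hamming_ball1)
  also have "\<dots> = card C * (n + 1)"
    by simp
  finally show ?thesis
    using card_Diff_subset[OF finite_subset[OF balls_words finite_bool_lists_length] balls_words]
    by (simp only: card_bool_lists_length)
qed

theorem transmits_single_error_of_code:
  fixes C :: "bool list set"
  assumes C_words: "C \<subseteq> {y. length y = n2}"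
    and C_disjoint: "disjoint_family_on hamming_ball1 C"
    and C_small: "card C * (n1 + n2 + 1) \<le> 2 ^ n2"
  shows "\<exists>enc1 enc2. transmits_single_error n1 n2 (2 ^ n1 * card C) enc1 enc2"
proof -
  define B where "B = card C"
  define U where "U = (\<Union>x\<in>C. hamming_ball1 x)"
  have fin_C: "finite C"
    using C_words finite_bool_lists_length by (rule finite_subset)
  have "B * n1 + B * (n2 + 1) \<le> 2 ^ n2"
    using C_small by (simp only: B_def distrib_left add.assoc)
  then have "card ({..<B} \<times> {..<n1}) \<le> card ({y. length y = n2} - U)"
    using card_outside_hamming_balls[OF C_words C_disjoint]
    by (simp only: U_def B_def card_cartesian_product card_lessThan)
  then have "\<exists>s. s ` ({..<B} \<times> {..<n1}) \<subseteq> {y. length y = n2} - U \<and>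
      inj_on s ({..<B} \<times> {..<n1})"
    by (intro card_le_inj) (simp_all add: finite_bool_lists_length)
  then obtain s :: "nat \<times> nat \<Rightarrow> bool list"
    where s: "s ` ({..<B} \<times> {..<n1}) \<subseteq> {y. length y = n2} - U"
      "inj_on s ({..<B} \<times> {..<n1})"
    by blast
  obtain w :: "nat \<Rightarrow> bool list" where w: "bij_betw w {..<2 ^ n1} {z. length z = n1}"
    using ex_bij_betw_nat_finite[OF finite_bool_lists_length, of n1]
    unfolding atLeast0LessThan card_bool_lists_length by blast
  obtain c :: "nat \<Rightarrow> bool list" where c: "bij_betw c {..<B} C"
    using ex_bij_betw_nat_finite[OF fin_C] unfolding atLeast0LessThan B_def by blast
  interpret feedback_code n1 n2 B w c s
  proof
    show "inj_on w {..<2 ^ n1}" and "inj_on s ({..<B} \<times> {..<n1})"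
      using w s(2) by (simp_all add: bij_betw_def)
    show "length (w a) = n1" if "a < 2 ^ n1" for a
      using bij_betw_apply[OF w] that by simp
    show "length (c b) = n2" if "b < B" for b
      using bij_betw_apply[OF c] that C_words by auto
    show "length (s (b, i)) = n2" and "s (b, i) \<notin> hamming_ball1 (c b')"
      if "b < B" "b' < B" "i < n1" for b b' i
    proof -
      have "s (b, i) \<in> {y. length y = n2} - U"
        using s(1) that by blast
      then show "length (s (b, i)) = n2" and "s (b, i) \<notin> hamming_ball1 (c b')"
        using bij_betw_apply[OF c] that unfolding U_def by auto
    qed
    show "disjoint_family_on (\<lambda>b. hamming_ball1 (c b)) {..<B}"
      unfolding disjoint_family_on_def
    proof (intro ballI impI)
      fix b b' assume "b \<in> {..<B}" "b' \<in> {..<B}" "b \<noteq> b'"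
      then show "hamming_ball1 (c b) \<inter> hamming_ball1 (c b') = {}"
        using C_disjoint c by (auto simp: bij_betw_def inj_on_eq_iff dest: disjoint_family_onD)
    qed
  qed
  show ?thesis
    using transmits_single_error by (auto simp: B_def)
qed

theorem corollary1:
  fixes k n :: nat
  assumes "k \<ge> 1" and "n \<ge> 2 ^ k - 1"
  shows "let n2 = 2 ^ k - 1; n1 = n - n2 in
         \<exists>enc1 enc2. transmits_single_error n1 n2
            (2 ^ n1 * ((2 ^ n2) div (n1 + n2 + 1))) enc1 enc2"
proof -
  define n2 where "n2 = (2::nat) ^ k - 1"
  define n1 where "n1 = n - n2"
  define B where "B = 2 ^ n2 div (n1 + n2 + 1)"
  have B_small: "B * (n1 + n2 + 1) \<le> 2 ^ n2"
    unfolding B_def by (rule div_times_less_eq_dividend)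
  have "B \<le> 2 ^ n2 div (n2 + 1)"
    unfolding B_def by (rule div_le_mono2) simp_all
  also have "\<dots> \<le> card (hamming_code k) * (n2 + 1) div (n2 + 1)"
    using card_hamming_code[of k] by (intro div_le_mono) (simp add: n2_def)
  also have "\<dots> = card (hamming_code k)"
    by (rule div_mult_self_is_m) simp
  finally have "B \<le> card (hamming_code k)" .
  then obtain C where C: "C \<subseteq> hamming_code k" "card C = B"
    by (rule obtain_subset_with_card_n)
  then have "C \<subseteq> {y. length y = n2}" and "disjoint_family_on hamming_ball1 C"
    using disjoint_family_on_mono[OF _ disjoint_family_on_hamming_code]
    by (auto simp: hamming_code_def n2_def)
  then have "\<exists>enc1 enc2. transmits_single_error n1 n2 (2 ^ n1 * B) enc1 enc2"
    using transmits_single_error_of_code[of C n2 n1] B_small C(2) by simp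
  then show ?thesis
    by (simp only: Let_def n1_def n2_def B_def)
qed

end
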